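(* Let $\mathbb{G}=(\mathcal{V},\mathcal{E})$ be a connected undirected graph on $\mathcal{V}=\{1,\dots,m\}$ with $\bar m$ edges and neighbor sets $\mathcal{N}_i$ ($i\notin\mathcal{N}_i$). For each edge $(i,j)$, in either order, let $A_{ij}\in\mathbb{R}^{d_{ij}\times n}$ have full row rank and $\boldsymbol{b}_{ij}\in\mathbb{R}^{d_{ij}}$, with $A_{ij}=A_{ji}$ and $\boldsymbol{b}_{ij}=-\boldsymbol{b}_{ji}$. Assume there exist $\boldsymbol{x}_1,\dots,\boldsymbol{x}_m\in\mathbb{R}^n$ satisfying the edge agreements $A_{ij}(\boldsymbol{x}_i-\boldsymbol{x}_j)=\boldsymbol{b}_{ij}$ for all $(i,j)\in\mathcal{E}$, and that $\ker\bar H'\cap\operatorname{image}\bar P=\{\boldsymbol{0}\}$. Consider the continuous-time update $$\dot{\boldsymbol{x}}_i(t)=-\sum_{j\in\mathcal{N}_i}P_{ij}\big(\boldsymbol{x}_i(t)-\boldsymbol{x}_j(t)-\bar{\boldsymbol{b}}_{ij}\big),\qquad i\in\mathcal{V}.$$ Then each $\boldsymbol{x}_i(t)$ converges exponentially fast to a constant vector $\boldsymbol{x}_i^*$, and $\boldsymbol{x}_1^*,\dots,\boldsymbol{x}_m^*$ satisfy $A_{ij}(\boldsymbol{x}_i^*-\boldsymbol{x}_j^* )=\boldsymbol{b}_{ij}$ for all $(i,j)\in\mathcal{E}$.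
   Context: $'$ denotes transpose. $P_{ij}=A_{ij}'(A_{ij}A_{ij}')^{-1}A_{ij}$, $\bar{\boldsymbol{b}}_{ij}=A_{ij}'(A_{ij}A_{ij}')^{-1}\boldsymbol{b}_{ij}$. With a fixed enumeration/orientation of edges $(i_1,j_1),\dots,(i_{\bar m},j_{\bar m})$: $\bar P=\mathrm{diag}\{P_{i_1j_1},\dots,P_{i_{\bar m}j_{\bar m}}\}\in\mathbb{R}^{\bar mn\times\bar mn}$ (block diagonal), $H\in\mathbb{R}^{\bar m\times m}$ the oriented incidence matrix whose $l$-th row has $1$ in column $i_l$, $-1$ in column $j_l$, $0$ elsewhere, and $\bar H=H\otimes I_n$. *)

theory Defs
  imports Complex_Main "Jordan_Normal_Form.Matrix"
begin

definition full_row_rank :: "real mat \<Rightarrow> bool" where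
  "full_row_rank A \<longleftrightarrow> (\<forall>c \<in> carrier_vec (dim_row A).
       transpose_mat A *\<^sub>v c = 0\<^sub>v (dim_col A) \<longrightarrow> c = 0\<^sub>v (dim_row A))"

definition minv :: "real mat \<Rightarrow> real mat" where
  "minv M = (SOME B. B \<in> carrier_mat (dim_row M) (dim_row M) \<and>
                     M * B = 1\<^sub>m (dim_row M) \<and> B * M = 1\<^sub>m (dim_row M))"

definition projP :: "real mat \<Rightarrow> real mat" where
  "projP A = transpose_mat A * minv (A * transpose_mat A) * A"

definition bbar :: "real mat \<Rightarrow> real vec \<Rightarrow> real vec" where
  "bbar A b = transpose_mat A *\<^sub>v (minv (A * transpose_mat A) *\<^sub>v b)"

definition vnorm :: "real vec \<Rightarrow> real" where
  "vnorm v = sqrt (\<Sum>k<dim_vec v. (v $ k)^2)"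

definition connected_ugraph :: "nat \<Rightarrow> (nat \<times> nat) set \<Rightarrow> bool" where
  "connected_ugraph m E \<longleftrightarrow> E \<subseteq> {0..<m} \<times> {0..<m} \<and> sym E \<and> (\<forall>i. (i,i) \<notin> E) \<and>
      (\<forall>i<m. \<forall>j<m. (i,j) \<in> E\<^sup>*)"

text \<open>A fixed enumeration/orientation of the undirected edges: each undirected
  edge appears exactly once, in one orientation.\<close>
definition edge_enum :: "(nat \<times> nat) set \<Rightarrow> (nat \<times> nat) list \<Rightarrow> bool" where
  "edge_enum E es \<longleftrightarrow> distinct es \<and> set es \<subseteq> E \<and>
     (\<forall>(i,j) \<in> E. (i,j) \<in> set es \<or> (j,i) \<in> set es) \<and>
     (\<forall>(i,j) \<in> set es. (j,i) \<notin> set es)"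

definition incH :: "nat \<Rightarrow> (nat \<times> nat) list \<Rightarrow> real mat" where
  "incH m es = mat (length es) m (\<lambda>(l,v).
      if v = fst (es ! l) then 1 else if v = snd (es ! l) then -1 else 0)"

text \<open>Hbar = H \<otimes> I_n.\<close>
definition Hbar :: "nat \<Rightarrow> nat \<Rightarrow> (nat \<times> nat) list \<Rightarrow> real mat" where
  "Hbar n m es = mat (length es * n) (m * n) (\<lambda>(r,c).
      if r mod n = c mod n then incH m es $$ (r div n, c div n) else 0)"

text \<open>Pbar = diag{P_{i_1 j_1}, ..., P_{i_mbar j_mbar}} (block diagonal).\<close>
definition Pbar :: "nat \<Rightarrow> (nat \<Rightarrow> nat \<Rightarrow> real mat) \<Rightarrow> (nat \<times> nat) list \<Rightarrow> real mat" where
  "Pbar n A es = mat (length es * n) (length es * n) (\<lambda>(r,c).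
      if r div n = c div n
      then projP (A (fst (es ! (r div n))) (snd (es ! (r div n)))) $$ (r mod n, c mod n)
      else 0)"

end

theory Submission
  imports Defs "Jordan_Normal_Form.Determinant"
begin

text \<open>
  The projected edge residuals \<open>r\<^bsub>ij\<^esub> = P\<^bsub>ij\<^esub> (x\<^sub>i - x\<^sub>j - bbar\<^bsub>ij\<^esub>)\<close> satisfy
  \<open>r\<^bsub>ji\<^esub> = - r\<^bsub>ij\<^esub>\<close> and drive the flow: \<open>x\<^sub>i' = - (\<Sum>j. r\<^bsub>ij\<^esub>)\<close>. Since \<open>P\<^bsub>ij\<^esub>\<close> is an
  orthogonal projection, the Lyapunov function \<open>V = (\<Sum>(i,j)\<in>E. |r\<^bsub>ij\<^esub>|\<^sup>2)\<close> satisfies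
  \<open>V' = -4 W\<close> with \<open>W = (\<Sum>i. |x\<^sub>i'|\<^sup>2)\<close>. Stacking the residuals of the enumerated edges
  gives a vector \<open>U\<close> fixed by \<open>Pbar\<close> with \<open>Hbar\<^sup>T U = -x'\<close>, so the kernel hypothesis yields
  \<open>|U|\<^sup>2 \<le> C |Hbar\<^sup>T U|\<^sup>2\<close>, i.e. \<open>V \<le> 2 C W\<close>. Hence \<open>V\<close> decays exponentially, and so does
  every \<open>x\<^sub>i'\<close> because \<open>W \<le> K V\<close>. Each \<open>x\<^sub>i\<close> therefore converges exponentially to some
  \<open>x\<^sub>i\<^sup>*\<close>; as \<open>r\<^bsub>ij\<^esub>\<close> tends to \<open>0\<close>, the limits satisfy \<open>P\<^bsub>ij\<^esub> (x\<^sub>i\<^sup>* - x\<^sub>j\<^sup>* - bbar\<^bsub>ij\<^esub>) = 0\<close>,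
  whence \<open>A\<^bsub>ij\<^esub> (x\<^sub>i\<^sup>* - x\<^sub>j\<^sup>*) = A\<^bsub>ij\<^esub> bbar\<^bsub>ij\<^esub> = b\<^bsub>ij\<^esub>\<close>.
\<close>

section \<open>Real vectors and matrices\<close>

lemma scalar_prod_self_nonneg: "0 \<le> (v::real vec) \<bullet> v"
  using conjugate_square_ge_0_vec[of v] by simp

lemma scalar_prod_self_eq_0_iff: "(v::real vec) \<in> carrier_vec k \<Longrightarrow> v \<bullet> v = 0 \<longleftrightarrow> v = 0\<^sub>v k"
  using conjugate_square_eq_0_vec[of v k] by simp

lemma component_sq_le_scalar_prod:
  "(v::real vec) \<in> carrier_vec n \<Longrightarrow> k < n \<Longrightarrow> (v $ k)\<^sup>2 \<le> v \<bullet> v"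
  unfolding scalar_prod_def by (auto simp: power2_eq_square intro: member_le_sum)

lemma mult_mat_vec_zero_right[simp]: "A \<in> carrier_mat r c \<Longrightarrow> (A::'a::semiring_0 mat) *\<^sub>v 0\<^sub>v c = 0\<^sub>v r"
  by (intro eq_vecI) (auto simp: scalar_prod_def)

lemma mult_mat_vec_uminus_right:
  "A \<in> carrier_mat r c \<Longrightarrow> v \<in> carrier_vec c \<Longrightarrow> (A::'a::ring mat) *\<^sub>v (- v) = - (A *\<^sub>v v)"
  by (intro eq_vecI) auto

lemma scalar_prod_gram:
  assumes "(X::real mat) \<in> carrier_mat p k" and "v \<in> carrier_vec k"
  shows "v \<bullet> (X\<^sup>T *\<^sub>v (X *\<^sub>v v)) = (X *\<^sub>v v) \<bullet> (X *\<^sub>v v)"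
  using assms transpose_vec_mult_scalar[of X p k v "X *\<^sub>v v"] comm_scalar_prod[of v k] by auto

lemma sum_mult_sq_le:
  fixes a b :: "nat \<Rightarrow> real"
  shows "(\<Sum>j<c. a j * b j)\<^sup>2 \<le> (\<Sum>j<c. \<bar>a j\<bar>)\<^sup>2 * (\<Sum>j<c. (b j)\<^sup>2)"
proof -
  define s where "s = sqrt (\<Sum>j<c. (b j)\<^sup>2)"
  have b_le: "\<bar>b j\<bar> \<le> s" if "j < c" for j
    unfolding s_def using that by (intro real_le_rsqrt) (auto intro: member_le_sum)
  have "\<bar>\<Sum>j<c. a j * b j\<bar> \<le> (\<Sum>j<c. \<bar>a j\<bar> * s)"
    by (rule order_trans[OF sum_abs]) (auto intro!: sum_mono mult_left_mono b_le simp: abs_mult)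
  then have "\<bar>\<Sum>j<c. a j * b j\<bar> \<le> (\<Sum>j<c. \<bar>a j\<bar>) * s"
    by (simp add: sum_distrib_right)
  then have "\<bar>\<Sum>j<c. a j * b j\<bar>\<^sup>2 \<le> ((\<Sum>j<c. \<bar>a j\<bar>) * s)\<^sup>2"
    by (intro power_mono) auto
  then show ?thesis
    unfolding power_mult_distrib s_def by (simp add: sum_nonneg)
qed

lemma mult_mat_vec_sq_le:
  assumes M: "(M::real mat) \<in> carrier_mat r c" and v: "v \<in> carrier_vec c"
  shows "(M *\<^sub>v v) \<bullet> (M *\<^sub>v v) \<le> (\<Sum>i<r. (\<Sum>j<c. \<bar>M $$ (i,j)\<bar>)\<^sup>2) * (v \<bullet> v)"
proof -
  have "(M *\<^sub>v v) \<bullet> (M *\<^sub>v v) = (\<Sum>i<r. (\<Sum>j<c. M $$ (i,j) * v $ j)\<^sup>2)"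
    using M v by (simp add: scalar_prod_def row_def power2_eq_square atLeast0LessThan)
  also have "\<dots> \<le> (\<Sum>i<r. (\<Sum>j<c. \<bar>M $$ (i,j)\<bar>)\<^sup>2 * (\<Sum>j<c. (v $ j)\<^sup>2))"
    by (intro sum_mono sum_mult_sq_le)
  also have "\<dots> = (\<Sum>i<r. (\<Sum>j<c. \<bar>M $$ (i,j)\<bar>)\<^sup>2) * (v \<bullet> v)"
    using v by (simp add: sum_distrib_right scalar_prod_def power2_eq_square atLeast0LessThan)
  finally show ?thesis .
qed

lemma vnorm_le_of_components_le:
  assumes v: "v \<in> carrier_vec n" and bound: "\<And>k. k < n \<Longrightarrow> \<bar>v $ k\<bar> \<le> c"
  shows "vnorm v \<le> sqrt (real n) * c"
proof (cases "n = 0")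
  case True
  then show ?thesis using v by (simp add: vnorm_def)
next
  case False
  then have "0 \<le> c" using bound[of 0] by linarith
  have "(\<Sum>k<n. (v $ k)\<^sup>2) \<le> (\<Sum>k<n. c\<^sup>2)"
    using bound by (intro sum_mono) (simp add: abs_le_square_iff[symmetric] \<open>0 \<le> c\<close>)
  then have "vnorm v \<le> sqrt (real n * c\<^sup>2)"
    using v unfolding vnorm_def by (simp add: real_sqrt_le_mono)
  then show ?thesis
    using \<open>0 \<le> c\<close> by (simp add: real_sqrt_mult)
qed

lemma inverse_mat_exists_of_injective:
  assumes M: "(M::'a::field mat) \<in> carrier_mat k k"
    and inj: "\<And>v. v \<in> carrier_vec k \<Longrightarrow> M *\<^sub>v v = 0\<^sub>v k \<Longrightarrow> v = 0\<^sub>v k"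
  shows "\<exists>B. B \<in> carrier_mat k k \<and> M * B = 1\<^sub>m k \<and> B * M = 1\<^sub>m k"
proof -
  have "det M \<noteq> 0" using det_0_iff_vec_prod_zero[OF M] inj by blast
  from det_non_zero_imp_unit[OF M this, of "()"]
  show ?thesis unfolding Units_def ring_mat_def by auto
qed

lemma minv_inverse:
  assumes M: "M \<in> carrier_mat k k"
    and inj: "\<And>v. v \<in> carrier_vec k \<Longrightarrow> M *\<^sub>v v = 0\<^sub>v k \<Longrightarrow> v = 0\<^sub>v k"
  shows "minv M \<in> carrier_mat k k" "M * minv M = 1\<^sub>m k" "minv M * M = 1\<^sub>m k"
proof -
  have "dim_row M = k" using M by auto
  with inverse_mat_exists_of_injective[OF M inj]
  show "minv M \<in> carrier_mat k k" "M * minv M = 1\<^sub>m k" "minv M * M = 1\<^sub>m k"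
    unfolding minv_def by (metis (mono_tags, lifting) someI_ex)+
qed

lemma gram_complement_injective:
  assumes Ht: "(Ht::real mat) \<in> carrier_mat p N" and Pb: "Pb \<in> carrier_mat N N"
    and ker: "\<forall>v \<in> carrier_vec N. (\<exists>z \<in> carrier_vec N. v = Pb *\<^sub>v z) \<and> Ht *\<^sub>v v = 0\<^sub>v p \<longrightarrow> v = 0\<^sub>v N"
    and v: "v \<in> carrier_vec N"
    and Qv: "(Ht\<^sup>T * Ht + (1\<^sub>m N - Pb)\<^sup>T * (1\<^sub>m N - Pb)) *\<^sub>v v = 0\<^sub>v N"
  shows "v = 0\<^sub>v N"
proof -
  define R where "R = 1\<^sub>m N - Pb"
  have R: "R \<in> carrier_mat N N" using Pb unfolding R_def by auto
  have "0 = v \<bullet> ((Ht\<^sup>T * Ht + R\<^sup>T * R) *\<^sub>v v)"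
    using Qv v unfolding R_def by simp
  also have "\<dots> = (Ht *\<^sub>v v) \<bullet> (Ht *\<^sub>v v) + (R *\<^sub>v v) \<bullet> (R *\<^sub>v v)"
    using Ht R v by (simp add: add_mult_distrib_mat_vec[of _ N N] scalar_prod_add_distrib[of _ N] scalar_prod_gram)
  finally have "(Ht *\<^sub>v v) \<bullet> (Ht *\<^sub>v v) = 0" "(R *\<^sub>v v) \<bullet> (R *\<^sub>v v) = 0"
    using scalar_prod_self_nonneg[of "Ht *\<^sub>v v"] scalar_prod_self_nonneg[of "R *\<^sub>v v"] by linarith+
  then have Ht_v: "Ht *\<^sub>v v = 0\<^sub>v p" and "R *\<^sub>v v = 0\<^sub>v N"
    using Ht R v by (auto simp: scalar_prod_self_eq_0_iff[of _ p] scalar_prod_self_eq_0_iff[of _ N])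
  then have diff: "v - Pb *\<^sub>v v = 0\<^sub>v N"
    unfolding R_def using Pb v by (simp add: minus_mult_distrib_mat_vec[of _ N N])
  have "v = Pb *\<^sub>v v"
  proof (rule eq_vecI)
    fix i assume "i < dim_vec (Pb *\<^sub>v v)"
    then show "v $ i = (Pb *\<^sub>v v) $ i"
      using arg_cong[OF diff, of "\<lambda>w. w $ i"] Pb v by simp
  qed (use Pb v in simp)
  then show ?thesis using ker v Pb Ht_v by auto
qed

text \<open>\<open>Q = Ht\<^sup>T Ht + R\<^sup>T R\<close> with \<open>R = 1 - Pb\<close> is invertible, and on fixed points \<open>u\<close> of \<open>Pb\<close>
  it reduces to \<open>Ht\<^sup>T Ht\<close>, so \<open>u = Q\<^sup>-\<^sup>1 Ht\<^sup>T (Ht u)\<close> is controlled by \<open>Ht u\<close>.\<close>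
lemma norm_le_on_fixed_points:
  assumes Ht: "(Ht::real mat) \<in> carrier_mat p N" and Pb: "Pb \<in> carrier_mat N N"
    and ker: "\<forall>v \<in> carrier_vec N. (\<exists>z \<in> carrier_vec N. v = Pb *\<^sub>v z) \<and> Ht *\<^sub>v v = 0\<^sub>v p \<longrightarrow> v = 0\<^sub>v N"
  shows "\<exists>C>0. \<forall>u\<in>carrier_vec N. Pb *\<^sub>v u = u \<longrightarrow> u \<bullet> u \<le> C * ((Ht *\<^sub>v u) \<bullet> (Ht *\<^sub>v u))"
proof -
  define R where "R = 1\<^sub>m N - Pb"
  define Q where "Q = Ht\<^sup>T * Ht + R\<^sup>T * R"
  have R: "R \<in> carrier_mat N N" and Q: "Q \<in> carrier_mat N N"
    using Ht Pb unfolding Q_def R_def by auto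
  obtain B where B: "B \<in> carrier_mat N N" "B * Q = 1\<^sub>m N"
    using inverse_mat_exists_of_injective[OF Q gram_complement_injective[OF Ht Pb ker]]
    unfolding Q_def R_def by blast
  define M where "M = B * Ht\<^sup>T"
  have M: "M \<in> carrier_mat N p" using B Ht unfolding M_def by auto
  define K where "K = (\<Sum>i<N. (\<Sum>j<p. \<bar>M $$ (i,j)\<bar>)\<^sup>2)"
  have "u \<bullet> u \<le> (K + 1) * ((Ht *\<^sub>v u) \<bullet> (Ht *\<^sub>v u))"
    if u: "u \<in> carrier_vec N" and fixed: "Pb *\<^sub>v u = u" for u
  proof -
    have "R *\<^sub>v u = 0\<^sub>v N"
      unfolding R_def using Pb u fixed by (simp add: minus_mult_distrib_mat_vec[of _ N N])
    then have Qu: "Q *\<^sub>v u = Ht\<^sup>T *\<^sub>v (Ht *\<^sub>v u)"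
      unfolding Q_def using Ht R u by (simp add: add_mult_distrib_mat_vec[of _ N N])
    have "u = (B * Q) *\<^sub>v u" using B u by simp
    also have "\<dots> = M *\<^sub>v (Ht *\<^sub>v u)"
      unfolding M_def using B(1) Q Ht u Qu by simp
    finally have u_eq: "u = M *\<^sub>v (Ht *\<^sub>v u)" .
    have "u \<bullet> u \<le> K * ((Ht *\<^sub>v u) \<bullet> (Ht *\<^sub>v u))"
      unfolding K_def by (subst (1 2) u_eq, rule mult_mat_vec_sq_le[OF M]) (use Ht u in auto)
    then show ?thesis using scalar_prod_self_nonneg[of "Ht *\<^sub>v u"] by (simp add: distrib_right)
  qed
  moreover have "0 < K + 1" unfolding K_def by (simp add: add_nonneg_pos sum_nonneg)
  ultimately show ?thesis by blast
qed

section \<open>Projections onto row spaces\<close>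

lemma bbar_carrier: "A \<in> carrier_mat d n \<Longrightarrow> bbar A c \<in> carrier_vec n"
  unfolding bbar_def carrier_vec_def by auto

context
  fixes A :: "real mat" and d n :: nat
  assumes A: "A \<in> carrier_mat d n" and rank: "full_row_rank A"
begin

lemma gram_injective:
  assumes v: "v \<in> carrier_vec d" and "(A * A\<^sup>T) *\<^sub>v v = 0\<^sub>v d"
  shows "v = 0\<^sub>v d"
proof -
  have "(A\<^sup>T *\<^sub>v v) \<bullet> (A\<^sup>T *\<^sub>v v) = v \<bullet> ((A * A\<^sup>T) *\<^sub>v v)"
    using scalar_prod_gram[of "A\<^sup>T" n d v] A v by simp
  then have "A\<^sup>T *\<^sub>v v = 0\<^sub>v n"
    using assms A by (simp add: scalar_prod_self_eq_0_iff[of _ n])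
  then show ?thesis using rank v A unfolding full_row_rank_def by auto
qed

lemma gram_minv:
  shows gram_minv_carrier: "minv (A * A\<^sup>T) \<in> carrier_mat d d"
    and gram_mult_minv: "A * A\<^sup>T * minv (A * A\<^sup>T) = 1\<^sub>m d"
    and transpose_gram_minv: "(minv (A * A\<^sup>T))\<^sup>T = minv (A * A\<^sup>T)"
proof -
  let ?M = "A * A\<^sup>T" and ?G = "minv (A * A\<^sup>T)"
  have M: "?M \<in> carrier_mat d d" and M_sym: "?M\<^sup>T = ?M"
    using A by (auto simp: transpose_mult[of A d n "A\<^sup>T"])
  note inv = minv_inverse[OF M gram_injective]
  show G: "?G \<in> carrier_mat d d" and MG: "?M * ?G = 1\<^sub>m d"
    using inv by auto
  have GM: "?G\<^sup>T * ?M = 1\<^sub>m d"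
    using transpose_mult[OF M G] MG M_sym by simp
  have "?G\<^sup>T = ?G\<^sup>T * (?M * ?G)"
    using G by (simp del: assoc_mult_mat add: MG)
  also have "\<dots> = (?G\<^sup>T * ?M) * ?G"
    by (rule assoc_mult_mat[symmetric]) (use G M in auto)
  finally show "?G\<^sup>T = ?G"
    using G by (simp del: assoc_mult_mat add: GM)
qed

lemma projP_carrier: "projP A \<in> carrier_mat n n"
  unfolding projP_def using A gram_minv_carrier by auto

lemma mult_projP: "A * projP A = A"
proof -
  have At: "A\<^sup>T \<in> carrier_mat n d" and TG: "A\<^sup>T * minv (A * A\<^sup>T) \<in> carrier_mat n d"
    using A gram_minv_carrier by auto
  have "A * projP A = A * (A\<^sup>T * minv (A * A\<^sup>T)) * A"
    unfolding projP_def by (rule assoc_mult_mat[symmetric, OF A TG A])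
  also have "\<dots> = A * A\<^sup>T * minv (A * A\<^sup>T) * A"
    by (simp only: assoc_mult_mat[OF A At gram_minv_carrier])
  finally show ?thesis
    using A by (simp del: assoc_mult_mat add: gram_mult_minv)
qed

lemma projP_idem: "projP A * projP A = projP A"
proof -
  have TG: "A\<^sup>T * minv (A * A\<^sup>T) \<in> carrier_mat n d"
    using A gram_minv_carrier by auto
  have "projP A * projP A = (A\<^sup>T * minv (A * A\<^sup>T)) * (A * projP A)"
    using assoc_mult_mat[OF TG A projP_carrier] unfolding projP_def .
  then show ?thesis
    unfolding mult_projP by (simp only: projP_def)
qed

lemma transpose_projP: "(projP A)\<^sup>T = projP A"
proof -
  have "(projP A)\<^sup>T = A\<^sup>T * (A\<^sup>T * minv (A * A\<^sup>T))\<^sup>T"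
    unfolding projP_def using A gram_minv_carrier by (intro transpose_mult) auto
  also have "\<dots> = projP A"
    unfolding projP_def using A gram_minv_carrier
    by (simp add: transpose_mult[of "A\<^sup>T" n d] transpose_gram_minv)
  finally show ?thesis .
qed

lemma bbar_solves:
  assumes c: "c \<in> carrier_vec d"
  shows "A *\<^sub>v bbar A c = c"
proof -
  have M: "A * A\<^sup>T \<in> carrier_mat d d"
    using A by auto
  have "A *\<^sub>v bbar A c = (A * A\<^sup>T) *\<^sub>v (minv (A * A\<^sup>T) *\<^sub>v c)"
    unfolding bbar_def using A gram_minv_carrier c by simp
  also have "\<dots> = (A * A\<^sup>T * minv (A * A\<^sup>T)) *\<^sub>v c"
    by (rule assoc_mult_mat_vec[symmetric, OF M gram_minv_carrier c])
  finally show ?thesis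
    using c by (simp del: assoc_mult_mat add: gram_mult_minv)
qed

lemma bbar_uminus: "c \<in> carrier_vec d \<Longrightarrow> bbar A (- c) = - bbar A c"
  unfolding bbar_def using A gram_minv_carrier
  by (simp add: mult_mat_vec_uminus_right[of _ d d] mult_mat_vec_uminus_right[of _ n d])

end

section \<open>Exponential decay on the half-line\<close>

lemma nonincreasing_of_deriv_nonpos:
  fixes g g' :: "real \<Rightarrow> real"
  assumes deriv: "\<And>t. 0 \<le> t \<Longrightarrow> (g has_real_derivative g' t) (at t within {0..})"
    and nonpos: "\<And>t. 0 \<le> t \<Longrightarrow> g' t \<le> 0" and s: "0 \<le> s" and "s \<le> t"
  shows "g t \<le> g s"
proof (rule DERIV_nonpos_imp_decreasing_open[OF \<open>s \<le> t\<close>])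
  fix y assume y: "s < y" "y < t"
  have "(g has_real_derivative g' y) (at y within {0<..})"
    using deriv[of y] y s by (auto intro: DERIV_subset)
  then have "(g has_real_derivative g' y) (at y)"
    using y s by (subst (asm) at_within_open) auto
  then show "\<exists>z. (g has_real_derivative z) (at y) \<and> z \<le> 0"
    using nonpos[of y] y s by auto
next
  have "continuous_on {0..} g"
    unfolding continuous_on_eq_continuous_within using deriv by (auto intro: DERIV_continuous)
  then show "continuous_on {s..t} g"
    by (rule continuous_on_subset) (use s in auto)
qed

lemma exp_decay_of_deriv_le:
  fixes V V' :: "real \<Rightarrow> real"
  assumes deriv: "\<And>t. 0 \<le> t \<Longrightarrow> (V has_real_derivative V' t) (at t within {0..})"
    and decay: "\<And>t. 0 \<le> t \<Longrightarrow> V' t \<le> - \<gamma> * V t" and t: "0 \<le> t"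
  shows "V t \<le> V 0 * exp (- \<gamma> * t)"
proof -
  define \<phi> where "\<phi> s = V s * exp (\<gamma> * s)" for s
  have "(\<phi> has_real_derivative (V' s + \<gamma> * V s) * exp (\<gamma> * s)) (at s within {0..})"
    if "0 \<le> s" for s
    unfolding \<phi>_def using deriv[OF that]
    by (auto intro!: derivative_eq_intros simp: algebra_simps)
  moreover have "(V' s + \<gamma> * V s) * exp (\<gamma> * s) \<le> 0" if "0 \<le> s" for s
    using decay[OF that] by (simp add: mult_nonpos_nonneg)
  ultimately have "\<phi> t \<le> \<phi> 0"
    by (rule nonincreasing_of_deriv_nonpos) (use t in auto)
  then show ?thesis
    unfolding \<phi>_def by (simp add: exp_minus field_simps)
qed

text \<open>\<open>f + (G/\<beta>) e\<^sup>-\<^sup>\<beta>\<^sup>t\<close> is nonincreasing and \<open>f - (G/\<beta>) e\<^sup>-\<^sup>\<beta>\<^sup>t\<close> nondecreasing; the limit is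
  squeezed between them.\<close>
lemma exp_convergence_of_deriv_bound:
  fixes f f' :: "real \<Rightarrow> real"
  assumes deriv: "\<And>t. 0 \<le> t \<Longrightarrow> (f has_real_derivative f' t) (at t within {0..})"
    and bound: "\<And>t. 0 \<le> t \<Longrightarrow> \<bar>f' t\<bar> \<le> G * exp (- \<beta> * t)" and \<beta>: "0 < \<beta>"
  shows "\<exists>L. \<forall>t\<ge>0. \<bar>f t - L\<bar> \<le> G / \<beta> * exp (- \<beta> * t)"
proof -
  define c where "c = G / \<beta>"
  define upper where "upper t = f t + c * exp (- \<beta> * t)" for t
  define lower where "lower t = f t - c * exp (- \<beta> * t)" for t
  have "0 \<le> G" using bound[of 0] abs_ge_zero[of "f' 0"] by simp
  then have "0 \<le> c" unfolding c_def using \<beta> by simp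
  have exp_deriv: "((\<lambda>t. c * exp (- \<beta> * t)) has_real_derivative - G * exp (- \<beta> * t)) (at t within {0..})"
    for t
    using \<beta> unfolding c_def by (auto intro!: derivative_eq_intros)
  have upper_mono: "upper t \<le> upper s" if "0 \<le> s" "s \<le> t" for s t
    by (rule nonincreasing_of_deriv_nonpos[OF _ _ that], unfold upper_def,
        rule DERIV_add[OF deriv exp_deriv]) (use bound in \<open>auto simp: abs_le_iff\<close>)
  have lower_mono: "lower s \<le> lower t" if "0 \<le> s" "s \<le> t" for s t
  proof -
    have "- lower t \<le> - lower s"
      by (rule nonincreasing_of_deriv_nonpos[OF _ _ that], unfold lower_def,
          rule DERIV_minus[OF DERIV_diff[OF deriv exp_deriv]]) (use bound in \<open>auto simp: abs_le_iff\<close>)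
    then show ?thesis by simp
  qed
  have "lower t \<le> upper t" for t
    unfolding upper_def lower_def using \<open>0 \<le> c\<close> by simp
  then have lower_le_upper: "lower t \<le> upper s" if "0 \<le> t" "0 \<le> s" for s t
    using lower_mono[of t s] upper_mono[of s t] that by (cases "t \<le> s") (auto intro: order_trans)
  define L where "L = Inf (upper ` {0..})"
  have "bdd_below (upper ` {0..})"
    using lower_le_upper[of 0] by (auto intro!: bdd_belowI[of _ "lower 0"])
  then have squeeze: "lower t \<le> L \<and> L \<le> upper t" if "0 \<le> t" for t
    unfolding L_def using that by (auto intro: cInf_lower cInf_greatest lower_le_upper)
  have "\<bar>f t - L\<bar> \<le> c * exp (- \<beta> * t)" if "0 \<le> t" for t
    using squeeze[OF that] unfolding upper_def lower_def by (auto simp: abs_le_iff)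
  then show ?thesis
    unfolding c_def by auto
qed

lemma tendsto_of_exp_bound:
  fixes f :: "real \<Rightarrow> real"
  assumes bound: "\<And>t. 0 \<le> t \<Longrightarrow> \<bar>f t - L\<bar> \<le> c * exp (- \<beta> * t)" and \<beta>: "0 < \<beta>"
  shows "(f \<longlongrightarrow> L) at_top"
proof -
  have "((\<lambda>t. exp (- \<beta> * t)) \<longlongrightarrow> 0) at_top"
    using \<beta> by (intro filterlim_compose[OF exp_at_bot] filterlim_tendsto_neg_mult_at_bot[OF tendsto_const]
        filterlim_ident) simp
  moreover have "\<forall>\<^sub>F t in at_top. norm (f t - L) \<le> norm (exp (- \<beta> * t)) * c"
    using eventually_ge_at_top[of 0] by eventually_elim (use bound in \<open>auto simp: mult.commute\<close>)
  ultimately have "((\<lambda>t. f t - L) \<longlongrightarrow> 0) at_top"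
    by (rule tendsto_0_le)
  then show ?thesis by (simp add: LIM_zero_iff)
qed

lemma abs_le_exp_of_sq_le:
  fixes c K \<beta> t :: real
  assumes "c\<^sup>2 \<le> K * exp (- (2 * \<beta>) * t)"
  shows "\<bar>c\<bar> \<le> sqrt K * exp (- \<beta> * t)"
proof -
  have sqrt_exp: "sqrt (exp (- (2 * \<beta>) * t)) = exp (- \<beta> * t)"
    by (rule real_sqrt_unique) (simp_all add: power2_eq_square flip: exp_add)
  have "\<bar>c\<bar> = sqrt (c\<^sup>2)" by simp
  also have "\<dots> \<le> sqrt (K * exp (- (2 * \<beta>) * t))"
    using assms by (rule real_sqrt_le_mono)
  also have "\<dots> = sqrt K * exp (- \<beta> * t)"
    by (simp only: real_sqrt_mult sqrt_exp)
  finally show ?thesis .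
qed

section \<open>Block vectors and sums over edges\<close>

lemma sum_lessThan_mult_blocks:
  fixes f :: "nat \<Rightarrow> 'a::comm_monoid_add"
  shows "(\<Sum>r<L * n. f r) = (\<Sum>l<L. \<Sum>k<n. f (l * n + k))"
proof -
  have "(\<Sum>r\<in>{l * n..<l * n + n}. f r) = (\<Sum>k<n. f (l * n + k))" for l
    using sum.shift_bounds_nat_ivl[of f 0 "l * n" n] by (simp add: atLeast0LessThan add.commute)
  then show ?thesis
    by (simp flip: sum.nat_group)
qed

lemma block_index_less: "l < L \<Longrightarrow> k < n \<Longrightarrow> l * n + k < L * (n::nat)"
proof -
  assume "l < L" "k < n"
  then have "l * n + k < Suc l * n" by simp
  also have "\<dots> \<le> L * n" using \<open>l < L\<close> by (intro mult_right_mono) auto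
  finally show ?thesis .
qed

lemma block_index_cases:
  assumes "r < L * (n::nat)"
  obtains l k where "l < L" "k < n" "r = l * n + k"
proof
  have "0 < n" using assms by (cases n) auto
  then show "r div n < L" "r mod n < n" "r = r div n * n + r mod n"
    using assms by (auto simp: less_mult_imp_div_less)
qed

lemma mult_mat_vec_index_blocks:
  assumes M: "M \<in> carrier_mat R (L * n)" and w: "w \<in> carrier_vec (L * n)" and r: "r < R"
  shows "(M *\<^sub>v w) $ r = (\<Sum>l<L. \<Sum>k<n. M $$ (r, l * n + k) * w $ (l * n + k))"
proof -
  have "(M *\<^sub>v w) $ r = (\<Sum>c<L * n. M $$ (r, c) * w $ c)"
    using M w r by (auto simp: scalar_prod_def atLeast0LessThan intro!: sum.cong)
  then show ?thesis by (simp add: sum_lessThan_mult_blocks)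
qed

lemma Pbar_index_block:
  assumes "l < length es" "l' < length es" "k < n" "k' < n"
  shows "Pbar n A es $$ (l * n + k, l' * n + k') =
         (if l' = l then projP (A (fst (es ! l)) (snd (es ! l))) $$ (k, k') else 0)"
  using assms block_index_less[of l "length es" k n] block_index_less[of l' "length es" k' n]
  unfolding Pbar_def by auto

lemma Hbar_index_block:
  assumes "l < length es" "i < m" "k < n" "k' < n"
  shows "Hbar n m es $$ (l * n + k', i * n + k) = (if k' = k then incH m es $$ (l, i) else 0)"
  using assms block_index_less[of l "length es" k' n] block_index_less[of i m k n]
  unfolding Hbar_def by auto

lemma Pbar_mult_vec_block:
  assumes l: "l < length es" and k: "k < n" and w: "w \<in> carrier_vec (length es * n)"
  shows "(Pbar n A es *\<^sub>v w) $ (l * n + k) =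
         (\<Sum>k'<n. projP (A (fst (es ! l)) (snd (es ! l))) $$ (k, k') * w $ (l * n + k'))"
proof -
  have "(Pbar n A es *\<^sub>v w) $ (l * n + k) =
        (\<Sum>l'<length es. \<Sum>k'<n. Pbar n A es $$ (l * n + k, l' * n + k') * w $ (l' * n + k'))"
    using block_index_less[OF l k] w by (intro mult_mat_vec_index_blocks) (auto simp: Pbar_def)
  also have "\<dots> = (\<Sum>l'<length es. \<Sum>k'<n.
      if l' = l then projP (A (fst (es ! l)) (snd (es ! l))) $$ (k, k') * w $ (l * n + k') else 0)"
    using l k by (intro sum.cong refl) (simp add: Pbar_index_block)
  also have "\<dots> = (\<Sum>k'<n. projP (A (fst (es ! l)) (snd (es ! l))) $$ (k, k') * w $ (l * n + k'))"
    by (subst sum.swap) (simp add: l)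
  finally show ?thesis .
qed

lemma Hbar_transpose_mult_vec_block:
  assumes i: "i < m" and k: "k < n" and w: "w \<in> carrier_vec (length es * n)"
  shows "((Hbar n m es)\<^sup>T *\<^sub>v w) $ (i * n + k) = (\<Sum>l<length es. incH m es $$ (l, i) * w $ (l * n + k))"
proof -
  have "((Hbar n m es)\<^sup>T *\<^sub>v w) $ (i * n + k) =
        (\<Sum>l<length es. \<Sum>k'<n. Hbar n m es $$ (l * n + k', i * n + k) * w $ (l * n + k'))"
    using block_index_less[OF i k] block_index_less[of _ "length es" _ n] w
    by (subst mult_mat_vec_index_blocks) (auto simp: Hbar_def intro!: sum.cong)
  also have "\<dots> = (\<Sum>l<length es. \<Sum>k'<n. if k' = k then incH m es $$ (l, i) * w $ (l * n + k) else 0)"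
    using i k by (intro sum.cong refl) (simp add: Hbar_index_block)
  also have "\<dots> = (\<Sum>l<length es. incH m es $$ (l, i) * w $ (l * n + k))"
    using k by simp
  finally show ?thesis .
qed

lemma sum_nth_distinct:
  "distinct xs \<Longrightarrow> (\<Sum>l<length xs. g (xs ! l)) = (\<Sum>p\<in>set xs. g p)"
  using sum.reindex_bij_betw[OF bij_betw_nth[OF _ refl refl], of xs g] by simp

lemma sum_swap_sym:
  assumes "sym E"
  shows "(\<Sum>(i, j)\<in>E. f j i) = (\<Sum>(i, j)\<in>E. f i j)"
  using assms by (intro sum.reindex_bij_witness[of _ prod.swap prod.swap]) (auto dest: symD)

lemma sum_edge_enum:
  assumes "sym E" and enum: "edge_enum E es"
  shows "(\<Sum>p\<in>E. h p) = (\<Sum>p\<in>set es. h p + h (prod.swap p))"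
proof -
  have E: "E = set es \<union> prod.swap ` set es"
    using enum \<open>sym E\<close> unfolding edge_enum_def by (fastforce dest: symD intro: image_eqI[of _ _ "prod.swap _"])
  have "set es \<inter> prod.swap ` set es = {}"
    using enum unfolding edge_enum_def by fastforce
  then have "(\<Sum>p\<in>E. h p) = (\<Sum>p\<in>set es. h p) + (\<Sum>p\<in>prod.swap ` set es. h p)"
    unfolding E by (intro sum.union_disjoint) auto
  then show ?thesis
    by (simp add: sum.reindex sum.distrib)
qed

section \<open>The projected consensus flow\<close>

locale edge_flow =
  fixes m n :: nat
    and E :: "(nat \<times> nat) set"
    and es :: "(nat \<times> nat) list"
    and A :: "nat \<Rightarrow> nat \<Rightarrow> real mat"
    and b :: "nat \<Rightarrow> nat \<Rightarrow> real vec"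
    and d :: "nat \<Rightarrow> nat \<Rightarrow> nat"
    and x :: "nat \<Rightarrow> real \<Rightarrow> real vec"
  assumes graph: "connected_ugraph m E"
    and enum: "edge_enum E es"
    and A_dim: "\<And>i j. (i,j) \<in> E \<Longrightarrow> A i j \<in> carrier_mat (d i j) n"
    and A_rank: "\<And>i j. (i,j) \<in> E \<Longrightarrow> full_row_rank (A i j)"
    and b_dim: "\<And>i j. (i,j) \<in> E \<Longrightarrow> b i j \<in> carrier_vec (d i j)"
    and A_sym: "\<And>i j. (i,j) \<in> E \<Longrightarrow> A i j = A j i"
    and b_anti: "\<And>i j. (i,j) \<in> E \<Longrightarrow> b i j = - b j i"
    and x_dim: "\<And>i t. i < m \<Longrightarrow> x i t \<in> carrier_vec n"
    and ode: "\<And>i t k. i < m \<Longrightarrow> t \<ge> 0 \<Longrightarrow> k < n \<Longrightarrow>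
               ((\<lambda>s. x i s $ k) has_real_derivative
                  (- (\<Sum>j\<in>{j. (i,j) \<in> E}.
                        (projP (A i j) *\<^sub>v (x i t - x j t - bbar (A i j) (b i j))) $ k)))
               (at t within {0..})"
begin

lemma edge_vertices: "(i, j) \<in> E \<Longrightarrow> i < m \<and> j < m"
  using graph unfolding connected_ugraph_def by auto

lemma sym_edges: "sym E"
  using graph unfolding connected_ugraph_def by auto

lemma edge_swap: "(i, j) \<in> E \<Longrightarrow> (j, i) \<in> E"
  using sym_edges by (auto dest: symD)

lemma no_loop: "(i, i) \<notin> E"
  using graph unfolding connected_ugraph_def by auto

definition nbrs :: "nat \<Rightarrow> nat set" where
  "nbrs i = {j. (i, j) \<in> E}"

lemma sum_edges: "(\<Sum>(i, j)\<in>E. f i j) = (\<Sum>i<m. \<Sum>j\<in>nbrs i. f i j)"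
proof -
  have "E = Sigma {..<m} nbrs"
    unfolding nbrs_def using edge_vertices by auto
  moreover have "finite (nbrs i)" for i
    unfolding nbrs_def using edge_vertices by (auto intro: finite_subset[of _ "{..<m}"])
  ultimately show ?thesis
    by (simp add: sum.Sigma)
qed

definition residual :: "nat \<Rightarrow> nat \<Rightarrow> real \<Rightarrow> real vec" where
  "residual i j t = projP (A i j) *\<^sub>v (x i t - x j t - bbar (A i j) (b i j))"

definition velocity :: "nat \<Rightarrow> real \<Rightarrow> real vec" where
  "velocity i t = vec n (\<lambda>k. - (\<Sum>j\<in>nbrs i. residual i j t $ k))"

declare x_dim[simp]

lemma dim_x[simp]: "i < m \<Longrightarrow> dim_vec (x i t) = n"
  using x_dim by auto

lemma edge_carriers:
  assumes "(i, j) \<in> E"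
  shows "i < m" "j < m" "bbar (A i j) (b i j) \<in> carrier_vec n" "projP (A i j) \<in> carrier_mat n n"
  using edge_vertices[OF assms] bbar_carrier[OF A_dim[OF assms]]
    projP_carrier[OF A_dim[OF assms] A_rank[OF assms]] by auto

lemma residual_carrier: "(i, j) \<in> E \<Longrightarrow> residual i j t \<in> carrier_vec n"
  unfolding residual_def carrier_vec_def using edge_carriers(4) by auto

lemma dim_velocity[simp]: "dim_vec (velocity i t) = n"
  unfolding velocity_def by simp

lemma velocity_carrier[simp]: "velocity i t \<in> carrier_vec n"
  by (simp add: carrier_vecI)

lemma residual_component:
  assumes "(i, j) \<in> E" and "k < n"
  shows "residual i j t $ k =
    (\<Sum>k'<n. projP (A i j) $$ (k, k') * (x i t $ k' - x j t $ k' - bbar (A i j) (b i j) $ k'))"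
  using assms edge_carriers[OF assms(1)]
  unfolding residual_def by (simp add: scalar_prod_def atLeast0LessThan)

lemma projP_residual: "(i, j) \<in> E \<Longrightarrow> projP (A i j) *\<^sub>v residual i j t = residual i j t"
  unfolding residual_def using edge_carriers[of i j] projP_idem[OF A_dim A_rank]
  by (simp flip: assoc_mult_mat_vec)

lemma residual_swap:
  assumes ij: "(i, j) \<in> E"
  shows "residual j i t = - residual i j t"
proof -
  let ?bb = "bbar (A i j) (b i j)"
  note carriers = edge_carriers[OF ij]
  have "bbar (A j i) (b j i) = - ?bb"
    using A_sym[OF ij] b_anti[OF edge_swap[OF ij]] bbar_uminus[OF A_dim[OF ij] A_rank[OF ij] b_dim[OF ij]]
    by simp
  moreover have "x j t - x i t - - ?bb = - (x i t - x j t - ?bb)"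
    using carriers by (intro eq_vecI) auto
  ultimately show ?thesis
    unfolding residual_def A_sym[OF ij, symmetric]
    using carriers by (simp add: mult_mat_vec_uminus_right[of _ n n])
qed

lemma deriv_x:
  assumes "i < m" "0 \<le> t" "k < n"
  shows "((\<lambda>s. x i s $ k) has_real_derivative velocity i t $ k) (at t within {0..})"
  using ode[OF assms] assms unfolding velocity_def residual_def nbrs_def by simp

lemma deriv_residual:
  assumes ij: "(i, j) \<in> E" and t: "0 \<le> t" and k: "k < n"
  shows "((\<lambda>s. residual i j s $ k) has_real_derivative
           (projP (A i j) *\<^sub>v (velocity i t - velocity j t)) $ k) (at t within {0..})"
proof -
  have "((\<lambda>s. \<Sum>k'<n. projP (A i j) $$ (k, k') * (x i s $ k' - x j s $ k' - bbar (A i j) (b i j) $ k'))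
      has_real_derivative (\<Sum>k'<n. projP (A i j) $$ (k, k') * (velocity i t $ k' - velocity j t $ k' - 0)))
      (at t within {0..})"
    using edge_vertices[OF ij] t by (intro DERIV_sum DERIV_cmult DERIV_diff deriv_x DERIV_const) auto
  then show ?thesis
    using edge_carriers[OF ij] k
    by (simp add: residual_component[OF ij k] scalar_prod_def atLeast0LessThan)
qed

lemma finite_edges: "finite E"
  using edge_vertices by (intro finite_subset[of E "{..<m} \<times> {..<m}"]) auto

lemma dim_residual[simp]: "(i, j) \<in> E \<Longrightarrow> dim_vec (residual i j t) = n"
  using residual_carrier by auto

definition lyapunov :: "real \<Rightarrow> real" where
  "lyapunov t = (\<Sum>(i, j)\<in>E. residual i j t \<bullet> residual i j t)"

definition dissipation :: "real \<Rightarrow> real" where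
  "dissipation t = (\<Sum>i<m. velocity i t \<bullet> velocity i t)"

lemma residual_inner_projP:
  assumes ij: "(i, j) \<in> E" and w: "w \<in> carrier_vec n"
  shows "residual i j t \<bullet> (projP (A i j) *\<^sub>v w) = residual i j t \<bullet> w"
proof -
  have "residual i j t \<bullet> (projP (A i j) *\<^sub>v w) = ((projP (A i j))\<^sup>T *\<^sub>v residual i j t) \<bullet> w"
    using transpose_vec_mult_scalar[of "projP (A i j)" n n w "residual i j t"]
      edge_carriers[OF ij] w residual_carrier[OF ij] by simp
  then show ?thesis
    using transpose_projP[OF A_dim[OF ij] A_rank[OF ij]] projP_residual[OF ij] by simp
qed

lemma sum_residual_inner_velocity: "(\<Sum>(i, j)\<in>E. residual i j t \<bullet> velocity i t) = - dissipation t"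
proof -
  have "(\<Sum>j\<in>nbrs i. residual i j t \<bullet> velocity i t) = - (velocity i t \<bullet> velocity i t)" for i
  proof -
    have "(\<Sum>j\<in>nbrs i. residual i j t \<bullet> velocity i t) =
          (\<Sum>j\<in>nbrs i. \<Sum>k<n. residual i j t $ k * velocity i t $ k)"
      by (simp add: scalar_prod_def atLeast0LessThan)
    also have "\<dots> = (\<Sum>k<n. (\<Sum>j\<in>nbrs i. residual i j t $ k) * velocity i t $ k)"
      by (subst sum.swap) (simp add: sum_distrib_right)
    also have "\<dots> = (\<Sum>k<n. - (velocity i t $ k * velocity i t $ k))"
      by (intro sum.cong refl) (simp add: velocity_def)
    also have "\<dots> = - (velocity i t \<bullet> velocity i t)"
      by (simp add: scalar_prod_def atLeast0LessThan sum_negf)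
    finally show ?thesis .
  qed
  then show ?thesis
    unfolding sum_edges dissipation_def by (simp add: sum_negf)
qed

lemma sum_residual_inner_velocity_swap: "(\<Sum>(i, j)\<in>E. residual i j t \<bullet> velocity j t) = dissipation t"
proof -
  have "(\<Sum>(i, j)\<in>E. residual i j t \<bullet> velocity j t) = (\<Sum>(i, j)\<in>E. residual j i t \<bullet> velocity i t)"
    by (rule sum_swap_sym[OF sym_edges])
  also have "\<dots> = (\<Sum>(i, j)\<in>E. - (residual i j t \<bullet> velocity i t))"
  proof (intro sum.cong refl, clarify)
    fix i j assume ij: "(i, j) \<in> E"
    show "residual j i t \<bullet> velocity i t = - (residual i j t \<bullet> velocity i t)"
      using residual_swap[OF ij] residual_carrier[OF ij] by simp
  qed
  also have "\<dots> = - (\<Sum>(i, j)\<in>E. residual i j t \<bullet> velocity i t)"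
    unfolding case_prod_unfold by (rule sum_negf)
  finally show ?thesis
    unfolding sum_residual_inner_velocity by simp
qed

lemma deriv_residual_sq:
  assumes ij: "(i, j) \<in> E" and t: "0 \<le> t"
  shows "((\<lambda>s. residual i j s \<bullet> residual i j s) has_real_derivative
           2 * (residual i j t \<bullet> velocity i t - residual i j t \<bullet> velocity j t)) (at t within {0..})"
proof -
  let ?r = "residual i j" and ?D = "projP (A i j) *\<^sub>v (velocity i t - velocity j t)"
  have dim_D: "dim_vec ?D = n" using edge_carriers[OF ij] by simp
  have "((\<lambda>s. \<Sum>k<n. ?r s $ k * ?r s $ k) has_real_derivative (\<Sum>k<n. 2 * (?r t $ k * ?D $ k)))
      (at t within {0..})"
  proof (rule DERIV_sum)
    fix k assume "k \<in> {..<n}"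
    then have k: "k < n" by simp
    from DERIV_mult[OF deriv_residual[OF ij t k] deriv_residual[OF ij t k]]
    show "((\<lambda>s. ?r s $ k * ?r s $ k) has_real_derivative 2 * (?r t $ k * ?D $ k)) (at t within {0..})"
      by (simp add: algebra_simps)
  qed
  moreover have "(\<lambda>s. \<Sum>k<n. ?r s $ k * ?r s $ k) = (\<lambda>s. ?r s \<bullet> ?r s)"
    using ij by (simp add: scalar_prod_def atLeast0LessThan)
  moreover have "(\<Sum>k<n. 2 * (?r t $ k * ?D $ k)) = 2 * (?r t \<bullet> ?D)"
    using dim_D unfolding scalar_prod_def atLeast0LessThan by (simp only: sum_distrib_left)
  moreover have "?r t \<bullet> ?D = ?r t \<bullet> velocity i t - ?r t \<bullet> velocity j t"
    using residual_inner_projP[OF ij] scalar_prod_minus_distrib[OF residual_carrier[OF ij]] by simp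
  ultimately show ?thesis by simp
qed

text \<open>The cross terms \<open>r\<^bsub>ij\<^esub> \<bullet> v\<^sub>i\<close> and \<open>r\<^bsub>ij\<^esub> \<bullet> v\<^sub>j\<close> sum to \<open>\<mp>dissipation\<close> because
  \<open>r\<^bsub>ji\<^esub> = - r\<^bsub>ij\<^esub>\<close> and \<open>v\<^sub>i = - (\<Sum>j. r\<^bsub>ij\<^esub>)\<close>.\<close>
lemma deriv_lyapunov:
  assumes t: "0 \<le> t"
  shows "(lyapunov has_real_derivative - 4 * dissipation t) (at t within {0..})"
proof -
  let ?r = "\<lambda>p. residual (fst p) (snd p)"
  have lyapunov_eq: "lyapunov = (\<lambda>s. \<Sum>p\<in>E. ?r p s \<bullet> ?r p s)"
    unfolding lyapunov_def case_prod_unfold ..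
  have "((\<lambda>s. \<Sum>p\<in>E. ?r p s \<bullet> ?r p s) has_real_derivative
      (\<Sum>p\<in>E. 2 * (?r p t \<bullet> velocity (fst p) t - ?r p t \<bullet> velocity (snd p) t))) (at t within {0..})"
    using t by (intro DERIV_sum deriv_residual_sq) auto
  moreover have "(\<Sum>p\<in>E. 2 * (?r p t \<bullet> velocity (fst p) t - ?r p t \<bullet> velocity (snd p) t)) =
      2 * (- dissipation t) - 2 * dissipation t"
    using sum_residual_inner_velocity[of t] sum_residual_inner_velocity_swap[of t]
    unfolding case_prod_unfold by (simp only: right_diff_distrib sum_subtractf sum_distrib_left[symmetric])
  ultimately show ?thesis
    unfolding lyapunov_eq by simp
qed

lemma residual_component_sq_le:
  assumes "(i, j) \<in> E" "k < n"
  shows "(residual i j t $ k)\<^sup>2 \<le> lyapunov t"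
proof -
  have "(residual i j t $ k)\<^sup>2 \<le> residual i j t \<bullet> residual i j t"
    using assms residual_carrier by (intro component_sq_le_scalar_prod) auto
  also have "\<dots> \<le> lyapunov t"
    unfolding lyapunov_def using assms finite_edges
    by (intro member_le_sum[of "(i, j)", where f = "\<lambda>(i, j). residual i j t \<bullet> residual i j t", simplified])
      (auto intro: scalar_prod_self_nonneg)
  finally show ?thesis .
qed

lemma velocity_component_sq_le:
  assumes "i < m" "k < n"
  shows "(velocity i t $ k)\<^sup>2 \<le> dissipation t"
proof -
  have "(velocity i t $ k)\<^sup>2 \<le> velocity i t \<bullet> velocity i t"
    using assms by (intro component_sq_le_scalar_prod) auto
  also have "\<dots> \<le> dissipation t"
    unfolding dissipation_def using assms by (intro member_le_sum) (auto intro: scalar_prod_self_nonneg)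
  finally show ?thesis .
qed

definition stacked_residual :: "real \<Rightarrow> real vec" where
  "stacked_residual t = vec (length es * n)
     (\<lambda>r. residual (fst (es ! (r div n))) (snd (es ! (r div n))) t $ (r mod n))"

lemma enum_edge: "l < length es \<Longrightarrow> es ! l \<in> E"
  using enum unfolding edge_enum_def by auto

lemma stacked_residual_carrier: "stacked_residual t \<in> carrier_vec (length es * n)"
  unfolding stacked_residual_def by simp

lemma stacked_residual_block:
  "l < length es \<Longrightarrow> k < n \<Longrightarrow>
   stacked_residual t $ (l * n + k) = residual (fst (es ! l)) (snd (es ! l)) t $ k"
  unfolding stacked_residual_def by (simp add: block_index_less)

lemma Pbar_stacked_residual: "Pbar n A es *\<^sub>v stacked_residual t = stacked_residual t"
proof (rule eq_vecI)
  fix r assume "r < dim_vec (stacked_residual t)"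
  then obtain l k where l: "l < length es" and k: "k < n" and r: "r = l * n + k"
    by (auto simp: stacked_residual_def elim: block_index_cases)
  let ?i = "fst (es ! l)" and ?j = "snd (es ! l)"
  have e: "(?i, ?j) \<in> E" using enum_edge[OF l] by simp
  have "(Pbar n A es *\<^sub>v stacked_residual t) $ r =
      (\<Sum>k'<n. projP (A ?i ?j) $$ (k, k') * residual ?i ?j t $ k')"
    unfolding r using Pbar_mult_vec_block[OF l k stacked_residual_carrier] stacked_residual_block[OF l]
    by simp
  also have "\<dots> = (projP (A ?i ?j) *\<^sub>v residual ?i ?j t) $ k"
    using edge_carriers[OF e] k e by (simp add: scalar_prod_def atLeast0LessThan)
  also have "\<dots> = stacked_residual t $ r"
    unfolding r using projP_residual[OF e] stacked_residual_block[OF l k] by simp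
  finally show "(Pbar n A es *\<^sub>v stacked_residual t) $ r = stacked_residual t $ r" .
qed (simp add: Pbar_def stacked_residual_def)

text \<open>Each oriented edge \<open>(a, c)\<close> contributes \<open>r\<^bsub>ac\<^esub>\<close> at vertex \<open>a\<close> and \<open>-r\<^bsub>ac\<^esub> = r\<^bsub>ca\<^esub>\<close> at
  vertex \<open>c\<close>, so row \<open>i\<close> of \<open>Hbar\<^sup>T\<close> collects \<open>(\<Sum>j. r\<^bsub>ij\<^esub>) = -v\<^sub>i\<close>.\<close>
lemma Hbar_stacked_residual:
  assumes i: "i < m" and k: "k < n"
  shows "((Hbar n m es)\<^sup>T *\<^sub>v stacked_residual t) $ (i * n + k) = - velocity i t $ k"
proof -
  define h where "h p = (if fst p = i then residual (fst p) (snd p) t $ k else 0)" for p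
  have edge_contribution: "incH m es $$ (l, i) * residual (fst (es ! l)) (snd (es ! l)) t $ k =
      h (es ! l) + h (prod.swap (es ! l))" if l: "l < length es" for l
  proof -
    obtain a c where ac: "es ! l = (a, c)" by (cases "es ! l")
    have "(a, c) \<in> E" using enum_edge[OF l] ac by simp
    then show ?thesis
      using l i k ac no_loop[of a] residual_swap[of a c t]
      unfolding incH_def h_def by auto
  qed
  have "((Hbar n m es)\<^sup>T *\<^sub>v stacked_residual t) $ (i * n + k) =
      (\<Sum>l<length es. incH m es $$ (l, i) * residual (fst (es ! l)) (snd (es ! l)) t $ k)"
    using Hbar_transpose_mult_vec_block[OF i k stacked_residual_carrier] stacked_residual_block[OF _ k]
    by simp
  also have "\<dots> = (\<Sum>p\<in>set es. h p + h (prod.swap p))"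
    using edge_contribution sum_nth_distinct[of es "\<lambda>p. h p + h (prod.swap p)"] enum
    unfolding edge_enum_def by simp
  also have "\<dots> = (\<Sum>p\<in>E. h p)"
    by (rule sum_edge_enum[OF sym_edges enum, symmetric])
  also have "\<dots> = (\<Sum>i'<m. \<Sum>j\<in>nbrs i'. h (i', j))"
    using sum_edges[of "\<lambda>i' j. h (i', j)"] by simp
  also have "\<dots> = (\<Sum>i'<m. if i' = i then (\<Sum>j\<in>nbrs i. residual i j t $ k) else 0)"
    by (intro sum.cong refl) (simp add: h_def)
  also have "\<dots> = - velocity i t $ k"
    using i k by (simp add: velocity_def)
  finally show ?thesis .
qed

lemma Hbar_stacked_residual_sq:
  "((Hbar n m es)\<^sup>T *\<^sub>v stacked_residual t) \<bullet> ((Hbar n m es)\<^sup>T *\<^sub>v stacked_residual t) = dissipation t"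
proof -
  let ?w = "(Hbar n m es)\<^sup>T *\<^sub>v stacked_residual t"
  have "?w \<bullet> ?w = (\<Sum>r<m * n. ?w $ r * ?w $ r)"
    by (simp add: scalar_prod_def atLeast0LessThan Hbar_def)
  also have "\<dots> = (\<Sum>i<m. \<Sum>k<n. ?w $ (i * n + k) * ?w $ (i * n + k))"
    by (rule sum_lessThan_mult_blocks)
  also have "\<dots> = dissipation t"
    unfolding dissipation_def by (simp add: Hbar_stacked_residual scalar_prod_def atLeast0LessThan)
  finally show ?thesis .
qed

lemma lyapunov_stacked_residual: "lyapunov t = 2 * (stacked_residual t \<bullet> stacked_residual t)"
proof -
  let ?q = "\<lambda>p. residual (fst p) (snd p) t \<bullet> residual (fst p) (snd p) t"
  have "stacked_residual t \<bullet> stacked_residual t =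
      (\<Sum>l<length es. \<Sum>k<n. stacked_residual t $ (l * n + k) * stacked_residual t $ (l * n + k))"
    using stacked_residual_carrier[of t]
    by (simp add: scalar_prod_def atLeast0LessThan sum_lessThan_mult_blocks)
  also have "\<dots> = (\<Sum>l<length es. ?q (es ! l))"
    using enum_edge by (simp add: stacked_residual_block scalar_prod_def atLeast0LessThan)
  also have "\<dots> = (\<Sum>p\<in>set es. ?q p)"
    by (rule sum_nth_distinct) (use enum in \<open>simp add: edge_enum_def\<close>)
  finally have stacked: "stacked_residual t \<bullet> stacked_residual t = (\<Sum>p\<in>set es. ?q p)" .
  have "lyapunov t = (\<Sum>p\<in>E. ?q p)"
    unfolding lyapunov_def case_prod_unfold ..
  also have "\<dots> = (\<Sum>p\<in>set es. ?q p + ?q (prod.swap p))"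
    by (rule sum_edge_enum[OF sym_edges enum])
  also have "\<dots> = (\<Sum>p\<in>set es. 2 * ?q p)"
  proof (rule sum.cong[OF refl])
    fix p assume "p \<in> set es"
    then have pE: "(fst p, snd p) \<in> E" using enum unfolding edge_enum_def by auto
    show "?q p + ?q (prod.swap p) = 2 * ?q p"
      using residual_swap[OF pE] residual_carrier[OF pE] by simp
  qed
  finally show ?thesis
    unfolding stacked by (simp add: sum_distrib_left)
qed

lemma dissipation_le_lyapunov: "\<exists>K\<ge>0. \<forall>t. dissipation t \<le> K * lyapunov t"
proof -
  define H where "H = (Hbar n m es)\<^sup>T"
  have H: "H \<in> carrier_mat (m * n) (length es * n)" unfolding H_def Hbar_def by auto
  define K where "K = (\<Sum>i<m * n. (\<Sum>j<length es * n. \<bar>H $$ (i, j)\<bar>)\<^sup>2)"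
  have "dissipation t \<le> K / 2 * lyapunov t" for t
    using mult_mat_vec_sq_le[OF H stacked_residual_carrier, of t]
    unfolding H_def K_def Hbar_stacked_residual_sq lyapunov_stacked_residual by simp
  moreover have "0 \<le> K / 2" unfolding K_def by (simp add: sum_nonneg)
  ultimately show ?thesis by blast
qed

end

locale coercive_edge_flow = edge_flow +
  assumes kernel: "\<forall>v \<in> carrier_vec (length es * n).
                   (\<exists>z \<in> carrier_vec (length es * n). v = Pbar n A es *\<^sub>v z) \<and>
                   transpose_mat (Hbar n m es) *\<^sub>v v = 0\<^sub>v (m * n)
                   \<longrightarrow> v = 0\<^sub>v (length es * n)"
begin

lemma lyapunov_le_dissipation: "\<exists>C>0. \<forall>t. lyapunov t \<le> C * dissipation t"
proof -
  obtain C where "C > 0" and C: "\<forall>u\<in>carrier_vec (length es * n). Pbar n A es *\<^sub>v u = u \<longrightarrow>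
      u \<bullet> u \<le> C * (((Hbar n m es)\<^sup>T *\<^sub>v u) \<bullet> ((Hbar n m es)\<^sup>T *\<^sub>v u))"
    using norm_le_on_fixed_points[OF _ _ kernel] by (auto simp: Hbar_def Pbar_def)
  have "stacked_residual t \<bullet> stacked_residual t \<le> C * dissipation t" for t
    using C[rule_format, OF stacked_residual_carrier Pbar_stacked_residual]
    unfolding Hbar_stacked_residual_sq .
  then have "lyapunov t \<le> 2 * C * dissipation t" for t
    unfolding lyapunov_stacked_residual by (simp add: mult.assoc)
  then show ?thesis
    using \<open>C > 0\<close> by (intro exI[of _ "2 * C"]) auto
qed

lemma lyapunov_exp_decay: "\<exists>\<gamma>>0. \<forall>t\<ge>0. lyapunov t \<le> lyapunov 0 * exp (- \<gamma> * t)"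
proof -
  obtain C where "C > 0" and C: "\<And>t. lyapunov t \<le> C * dissipation t"
    using lyapunov_le_dissipation by blast
  have "- 4 * dissipation t \<le> - (4 / C) * lyapunov t" for t
    using C[of t] \<open>C > 0\<close> by (simp add: field_simps)
  then have "lyapunov t \<le> lyapunov 0 * exp (- (4 / C) * t)" if "0 \<le> t" for t
    by (intro exp_decay_of_deriv_le[OF deriv_lyapunov _ that])
  then show ?thesis
    using \<open>C > 0\<close> by (intro exI[of _ "4 / C"]) auto
qed

lemma velocity_exp_decay: "\<exists>G \<beta>. 0 < \<beta> \<and> (\<forall>i<m. \<forall>k<n. \<forall>t\<ge>0. \<bar>velocity i t $ k\<bar> \<le> G * exp (- \<beta> * t))"
proof -
  obtain \<gamma> where "\<gamma> > 0" and decay: "\<And>t. 0 \<le> t \<Longrightarrow> lyapunov t \<le> lyapunov 0 * exp (- \<gamma> * t)"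
    using lyapunov_exp_decay by blast
  obtain K where "K \<ge> 0" and K: "\<And>t. dissipation t \<le> K * lyapunov t"
    using dissipation_le_lyapunov by blast
  have "\<bar>velocity i t $ k\<bar> \<le> sqrt (K * lyapunov 0) * exp (- (\<gamma> / 2) * t)"
    if "i < m" "k < n" "0 \<le> t" for i k t
  proof (rule abs_le_exp_of_sq_le)
    have "(velocity i t $ k)\<^sup>2 \<le> K * lyapunov t"
      using velocity_component_sq_le[OF that(1,2)] K order_trans by blast
    also have "\<dots> \<le> K * (lyapunov 0 * exp (- \<gamma> * t))"
      using decay[OF that(3)] \<open>K \<ge> 0\<close> by (rule mult_left_mono)
    finally show "(velocity i t $ k)\<^sup>2 \<le> K * lyapunov 0 * exp (- (2 * (\<gamma> / 2)) * t)"
      by (simp add: mult.assoc)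
  qed
  then show ?thesis
    using \<open>\<gamma> > 0\<close> by (intro exI[of _ "sqrt (K * lyapunov 0)"] exI[of _ "\<gamma> / 2"]) auto
qed

lemma tendsto_residual_0:
  assumes "(i, j) \<in> E" "k < n"
  shows "((\<lambda>t. residual i j t $ k) \<longlongrightarrow> 0) at_top"
proof -
  obtain \<gamma> where "\<gamma> > 0" and decay: "\<And>t. 0 \<le> t \<Longrightarrow> lyapunov t \<le> lyapunov 0 * exp (- \<gamma> * t)"
    using lyapunov_exp_decay by blast
  have "\<bar>residual i j t $ k - 0\<bar> \<le> sqrt (lyapunov 0) * exp (- (\<gamma> / 2) * t)" if "0 \<le> t" for t
  proof -
    have "(residual i j t $ k)\<^sup>2 \<le> lyapunov 0 * exp (- (2 * (\<gamma> / 2)) * t)"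
      using order_trans[OF residual_component_sq_le[OF assms] decay[OF that]] by simp
    then have "\<bar>residual i j t $ k\<bar> \<le> sqrt (lyapunov 0) * exp (- (\<gamma> / 2) * t)"
      by (rule abs_le_exp_of_sq_le)
    then show ?thesis by simp
  qed
  then show ?thesis
    by (rule tendsto_of_exp_bound) (simp_all add: \<open>\<gamma> > 0\<close>)
qed

definition x_lim :: "nat \<Rightarrow> real vec" where
  "x_lim i = vec n (\<lambda>k. Lim at_top (\<lambda>t. x i t $ k))"

lemma dim_x_lim[simp]: "dim_vec (x_lim i) = n"
  unfolding x_lim_def by simp

lemma x_lim_carrier[simp]: "x_lim i \<in> carrier_vec n"
  by (simp add: carrier_vecI)

lemma x_lim_exp_rate:
  "\<exists>c \<beta>. 0 < \<beta> \<and> (\<forall>i<m. \<forall>k<n. \<forall>t\<ge>0. \<bar>x i t $ k - x_lim i $ k\<bar> \<le> c * exp (- \<beta> * t))"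
proof -
  obtain G \<beta> where "0 < \<beta>"
    and G: "\<And>i k t. i < m \<Longrightarrow> k < n \<Longrightarrow> 0 \<le> t \<Longrightarrow> \<bar>velocity i t $ k\<bar> \<le> G * exp (- \<beta> * t)"
    using velocity_exp_decay by blast
  have "\<bar>x i t $ k - x_lim i $ k\<bar> \<le> G / \<beta> * exp (- \<beta> * t)" if "i < m" "k < n" "0 \<le> t" for i k t
  proof -
    have "\<exists>L. \<forall>t\<ge>0. \<bar>x i t $ k - L\<bar> \<le> G / \<beta> * exp (- \<beta> * t)"
    proof (rule exp_convergence_of_deriv_bound)
      show "((\<lambda>t. x i t $ k) has_real_derivative velocity i s $ k) (at s within {0..})" if "0 \<le> s" for s
        using deriv_x \<open>i < m\<close> \<open>k < n\<close> that by blast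
      show "\<bar>velocity i s $ k\<bar> \<le> G * exp (- \<beta> * s)" if "0 \<le> s" for s
        using G \<open>i < m\<close> \<open>k < n\<close> that by blast
    qed (rule \<open>0 < \<beta>\<close>)
    then obtain L where L: "\<And>t. 0 \<le> t \<Longrightarrow> \<bar>x i t $ k - L\<bar> \<le> G / \<beta> * exp (- \<beta> * t)"
      by blast
    have "((\<lambda>t. x i t $ k) \<longlongrightarrow> L) at_top"
      using L \<open>0 < \<beta>\<close> by (rule tendsto_of_exp_bound)
    then have "x_lim i $ k = L"
      unfolding x_lim_def using \<open>k < n\<close> by (simp add: tendsto_Lim)
    then show ?thesis using L[OF \<open>0 \<le> t\<close>] by simp
  qed
  then show ?thesis
    using \<open>0 < \<beta>\<close> by blast
qed

lemma tendsto_x_lim: "i < m \<Longrightarrow> k < n \<Longrightarrow> ((\<lambda>t. x i t $ k) \<longlongrightarrow> x_lim i $ k) at_top"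
  using x_lim_exp_rate by (metis tendsto_of_exp_bound)

lemma projP_x_lim:
  assumes ij: "(i, j) \<in> E"
  shows "projP (A i j) *\<^sub>v (x_lim i - x_lim j - bbar (A i j) (b i j)) = 0\<^sub>v n"
proof (rule eq_vecI)
  note carriers = edge_carriers[OF ij]
  fix k assume "k < dim_vec (0\<^sub>v n)"
  then have k: "k < n" by simp
  let ?lim = "\<Sum>k'<n. projP (A i j) $$ (k, k') * (x_lim i $ k' - x_lim j $ k' - bbar (A i j) (b i j) $ k')"
  have "((\<lambda>t. residual i j t $ k) \<longlongrightarrow> ?lim) at_top"
    unfolding residual_component[OF ij k] using carriers
    by (intro tendsto_intros tendsto_x_lim) auto
  then have "?lim = 0"
    using tendsto_residual_0[OF ij k] by (rule tendsto_unique[rotated 1]) simp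
  then show "(projP (A i j) *\<^sub>v (x_lim i - x_lim j - bbar (A i j) (b i j))) $ k = 0\<^sub>v n $ k"
    using carriers k x_lim_carrier by (simp add: scalar_prod_def atLeast0LessThan)
qed (use edge_carriers[OF ij] in simp)

lemma x_lim_edge_constraint:
  assumes ij: "(i, j) \<in> E"
  shows "A i j *\<^sub>v (x_lim i - x_lim j) = b i j"
proof -
  let ?bb = "bbar (A i j) (b i j)" and ?w = "x_lim i - x_lim j - bbar (A i j) (b i j)"
  note carriers = edge_carriers[OF ij] and A = A_dim[OF ij]
  have w: "?w \<in> carrier_vec n" using carriers x_lim_carrier by simp
  have "A i j *\<^sub>v ?w = (A i j * projP (A i j)) *\<^sub>v ?w"
    by (simp add: mult_projP[OF A A_rank[OF ij]])
  also have "\<dots> = 0\<^sub>v (d i j)"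
    using A carriers w by (simp add: projP_x_lim[OF ij])
  finally have Aw: "A i j *\<^sub>v ?w = 0\<^sub>v (d i j)" .
  have "x_lim i - x_lim j = ?w + ?bb"
    using carriers by (intro eq_vecI) auto
  then have "A i j *\<^sub>v (x_lim i - x_lim j) = A i j *\<^sub>v (?w + ?bb)"
    by (rule arg_cong)
  also have "\<dots> = A i j *\<^sub>v ?w + A i j *\<^sub>v ?bb"
    by (rule mult_add_distrib_mat_vec[OF A w carriers(3)])
  also have "\<dots> = b i j"
    using Aw bbar_solves[OF A A_rank[OF ij] b_dim[OF ij]] b_dim[OF ij] by simp
  finally show ?thesis .
qed

lemma x_lim_vnorm_rate:
  "\<exists>C \<alpha>. \<alpha> > 0 \<and> (\<forall>i<m. \<forall>t\<ge>0. vnorm (x i t - x_lim i) \<le> C * exp (- \<alpha> * t))"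
proof -
  obtain c \<beta> where "0 < \<beta>"
    and rate: "\<And>i k t. i < m \<Longrightarrow> k < n \<Longrightarrow> 0 \<le> t \<Longrightarrow> \<bar>x i t $ k - x_lim i $ k\<bar> \<le> c * exp (- \<beta> * t)"
    using x_lim_exp_rate by blast
  have "vnorm (x i t - x_lim i) \<le> sqrt (real n) * c * exp (- \<beta> * t)" if "i < m" "0 \<le> t" for i t
    using vnorm_le_of_components_le[of "x i t - x_lim i" n "c * exp (- \<beta> * t)"] rate that x_lim_carrier
    by (simp add: mult.assoc)
  then show ?thesis
    using \<open>0 < \<beta>\<close> by blast
qed

end

theorem corollary1:
  fixes m n :: nat
    and E :: "(nat \<times> nat) set"
    and es :: "(nat \<times> nat) list"
    and A :: "nat \<Rightarrow> nat \<Rightarrow> real mat"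
    and b :: "nat \<Rightarrow> nat \<Rightarrow> real vec"
    and d :: "nat \<Rightarrow> nat \<Rightarrow> nat"
    and x :: "nat \<Rightarrow> real \<Rightarrow> real vec"
  assumes graph: "connected_ugraph m E"
    and enum: "edge_enum E es"
    and A_dim: "\<And>i j. (i,j) \<in> E \<Longrightarrow> A i j \<in> carrier_mat (d i j) n"
    and A_rank: "\<And>i j. (i,j) \<in> E \<Longrightarrow> full_row_rank (A i j)"
    and b_dim: "\<And>i j. (i,j) \<in> E \<Longrightarrow> b i j \<in> carrier_vec (d i j)"
    and A_sym: "\<And>i j. (i,j) \<in> E \<Longrightarrow> A i j = A j i"
    and b_anti: "\<And>i j. (i,j) \<in> E \<Longrightarrow> b i j = - b j i"
    and solvable: "\<exists>y. (\<forall>i<m. y i \<in> carrier_vec n) \<and>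
                     (\<forall>(i,j) \<in> E. A i j *\<^sub>v (y i - y j) = b i j)"
    and kernel: "\<forall>v \<in> carrier_vec (length es * n).
                   (\<exists>z \<in> carrier_vec (length es * n). v = Pbar n A es *\<^sub>v z) \<and>
                   transpose_mat (Hbar n m es) *\<^sub>v v = 0\<^sub>v (m * n)
                   \<longrightarrow> v = 0\<^sub>v (length es * n)"
    and x_dim: "\<And>i t. i < m \<Longrightarrow> x i t \<in> carrier_vec n"
    and ode: "\<And>i t k. i < m \<Longrightarrow> t \<ge> 0 \<Longrightarrow> k < n \<Longrightarrow>
               ((\<lambda>s. x i s $ k) has_real_derivative
                  (- (\<Sum>j\<in>{j. (i,j) \<in> E}.
                        (projP (A i j) *\<^sub>v (x i t - x j t - bbar (A i j) (b i j))) $ k)))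
               (at t within {0..})"
  shows "\<exists>xs. (\<forall>i<m. xs i \<in> carrier_vec n \<and>
               (\<exists>C \<alpha>. \<alpha> > 0 \<and> (\<forall>t\<ge>0. vnorm (x i t - xs i) \<le> C * exp (- \<alpha> * t)))) \<and>
             (\<forall>(i,j) \<in> E. A i j *\<^sub>v (xs i - xs j) = b i j)"
proof -
  interpret coercive_edge_flow m n E es A b d x
    by unfold_locales (fact graph enum A_dim A_rank b_dim A_sym b_anti x_dim ode kernel)+
  have "\<forall>i<m. x_lim i \<in> carrier_vec n \<and>
      (\<exists>C \<alpha>. \<alpha> > 0 \<and> (\<forall>t\<ge>0. vnorm (x i t - x_lim i) \<le> C * exp (- \<alpha> * t)))"
    using x_lim_vnorm_rate by auto
  moreover have "\<forall>(i, j)\<in>E. A i j *\<^sub>v (x_lim i - x_lim j) = b i j"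
    using x_lim_edge_constraint by auto
  ultimately show ?thesis by blast
qed

end
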